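(* In the weighted push-sum setting below, if $\{\mathbb G(t)\}$ is uniformly strongly connected, then the sequence of stochastic matrices $\{S(t)\}$ has a unique absolute probability sequence $\{\pi(t)\}$, given by $\pi_i(t)=y_i(t)$ for all $i\in\mathcal V$ and $t\ge0$.
   Context: Setting. Fix $n$ agents, $\mathcal V=\{1,\dots,n\}$. For each $t\in\{0,1,2,\dots\}$, $\mathbb G(t)=(\mathcal V,\mathcal E(t))$ is a directed graph containing a self-arc $(i,i)$ at every vertex; $\mathcal N_i(t)=\{j:(j,i)\in\mathcal E(t)\}$ and $\mathcal N_i^-(t)=\{k:(i,k)\in\mathcal E(t)\}$. Weights $w_{ij}(t)$ are positive for $j\in\mathcal N_i(t)$ and $w_{ij}(t)=0$ otherwise, and satisfy: there is $\beta>0$ with $w_{ij}(t)\ge\beta$ whenever $j\in\mathcal N_i(t)$, and $\sum_{j\in\mathcal N_i^-(t)}w_{ji}(t)=1$ for all $i,t$. The sequence $\{\mathbb G(t)\}$ is uniformly strongly connected if there is a positive integer $L$ such that for every $t\ge0$ the graph with vertex set $\mathcal V$ and edge set $\bigcup_{k=t}^{t+L-1}\mathcal E(k)$ is strongly connected. Weighted push-sum: each agent knows $c_i>0$ with $\sum_ic_i=1$; $y_i(t+1)=\sum_{j\in\mathcal N_i(t)}w_{ij}(t)y_j(t)$ with $y_i(0)=c_i$. Define the row-stochastic matrix $S(t)$ with entries $s_{ij}(t)=w_{ij}(t)y_j(t)/y_i(t+1)$. Definition: for a sequence $\{S(t)\}_{t\ge0}$ of (row) stochastic matrices, a sequence of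 stochastic vectors $\{\pi(t)\}_{t\ge0}$ (nonnegative entries summing to one) is an absolute probability sequence if $\pi^\top(t)=\pi^\top(t+1)S(t)$ for all $t\ge0$. *)

theory Defs
  imports "HOL-Analysis.Analysis"
begin

text \<open>Agents are indexed by 0..n-1 (a relabelling of 1..n). A time-varying digraph is
  E :: nat => (nat * nat) set; (j,i) in E t means arc from j to i at time t.
  Weights: w t i j is w_ij(t).\<close>

definition in_nbrs :: "(nat \<Rightarrow> (nat \<times> nat) set) \<Rightarrow> nat \<Rightarrow> nat \<Rightarrow> nat set" where
  "in_nbrs E t i = {j. (j, i) \<in> E t}"

definition out_nbrs :: "(nat \<Rightarrow> (nat \<times> nat) set) \<Rightarrow> nat \<Rightarrow> nat \<Rightarrow> nat set" where
  "out_nbrs E t i = {k. (i, k) \<in> E t}"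

definition strongly_connected :: "nat \<Rightarrow> (nat \<times> nat) set \<Rightarrow> bool" where
  "strongly_connected n A \<longleftrightarrow>
     (\<forall>i<n. \<forall>j<n. (i, j) \<in> (A \<inter> ({0..<n} \<times> {0..<n}))\<^sup>*)"

definition uniformly_strongly_connected :: "nat \<Rightarrow> (nat \<Rightarrow> (nat \<times> nat) set) \<Rightarrow> bool" where
  "uniformly_strongly_connected n E \<longleftrightarrow>
     (\<exists>L::nat. L > 0 \<and> (\<forall>t. strongly_connected n (\<Union>k\<in>{t..<t+L}. E k)))"

primrec push_sum :: "nat \<Rightarrow> (nat \<Rightarrow> nat \<Rightarrow> nat \<Rightarrow> real) \<Rightarrow> (nat \<Rightarrow> real) \<Rightarrow> nat \<Rightarrow> nat \<Rightarrow> real" where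
  "push_sum n w c 0 i = c i"
| "push_sum n w c (Suc t) i = (\<Sum>j<n. w t i j * push_sum n w c t j)"

definition push_sum_S :: "nat \<Rightarrow> (nat \<Rightarrow> nat \<Rightarrow> nat \<Rightarrow> real) \<Rightarrow> (nat \<Rightarrow> real) \<Rightarrow> nat \<Rightarrow> nat \<Rightarrow> nat \<Rightarrow> real" where
  "push_sum_S n w c t i j = w t i j * push_sum n w c t j / push_sum n w c (Suc t) i"

definition stochastic_vector :: "nat \<Rightarrow> (nat \<Rightarrow> real) \<Rightarrow> bool" where
  "stochastic_vector n p \<longleftrightarrow> (\<forall>i<n. p i \<ge> 0) \<and> (\<Sum>i<n. p i) = 1"

definition absolute_probability_sequence ::
  "nat \<Rightarrow> (nat \<Rightarrow> nat \<Rightarrow> nat \<Rightarrow> real) \<Rightarrow> (nat \<Rightarrow> nat \<Rightarrow> real) \<Rightarrow> bool" where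
  "absolute_probability_sequence n S p \<longleftrightarrow>
     (\<forall>t. stochastic_vector n (p t)) \<and>
     (\<forall>t. \<forall>j<n. p t j = (\<Sum>i<n. p (Suc t) i * S t i j))"

end

theory Submission imports Defs begin

text \<open>The push-sum weights y(t) are stochastic and, since W(t) is column stochastic, satisfy
  y(t)^T = y(t+1)^T S(t), so they form an absolute probability sequence. For any other one \<pi>,
  the ratios q(t) = \<pi>(t) / y(t) satisfy the backward averaging equation q(t) = W(t)^T q(t+1),
  and q is bounded because y is bounded away from 0: every agent is reached from every other
  within K = n L steps, each step carrying weight at least \<beta>. Going back K steps, the spread
  max q - min q shrinks by the factor 1 - \<beta>^K, so a bounded q is constant in i at every time,
  and normalisation forces q = 1.\<close>

lemma rtrancl_leaves_set:
  assumes "(x, y) \<in> A\<^sup>*" "x \<in> S" "y \<notin> S"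
  shows "\<exists>a b. (a, b) \<in> A \<and> a \<in> S \<and> b \<notin> S"
  using assms by (induction rule: rtrancl_induct) auto

lemma nonpos_if_le_geometric:
  fixes x B c :: real
  assumes "0 \<le> c" "c < 1" "\<And>m. x \<le> c ^ m * B"
  shows "x \<le> 0"
proof -
  have "(\<lambda>m. c ^ m * B) \<longlonglongrightarrow> 0 * B"
    by (intro tendsto_mult tendsto_const LIMSEQ_power_zero) (use assms in auto)
  then show ?thesis
    using assms(3) by (intro LIMSEQ_le_const) auto
qed

primrec reach :: "(nat \<Rightarrow> (nat \<times> nat) set) \<Rightarrow> nat \<Rightarrow> nat \<Rightarrow> nat \<Rightarrow> nat set" where
  "reach E t 0 j = {j}"
| "reach E t (Suc s) j = {k. \<exists>v\<in>reach E t s j. (v, k) \<in> E (t + s)}"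

locale uniformly_connected_graphs =
  fixes n :: nat and E :: "nat \<Rightarrow> (nat \<times> nat) set" and L :: nat
  assumes n_pos: "n \<ge> 1"
    and edges: "\<And>t. E t \<subseteq> {0..<n} \<times> {0..<n}"
    and self_arcs: "\<And>t i. i < n \<Longrightarrow> (i, i) \<in> E t"
    and window_connected: "\<And>t. strongly_connected n (\<Union>k\<in>{t..<t+L}. E k)"
begin

lemma arc_in_range: "(a, b) \<in> E t \<Longrightarrow> a < n \<and> b < n"
  using edges[of t] by auto

lemma reach_subset: "j < n \<Longrightarrow> reach E t s j \<subseteq> {..<n}"
  by (induction s) (auto dest: arc_in_range)

lemma reach_mono:
  assumes "j < n" "s \<le> s'"
  shows "reach E t s j \<subseteq> reach E t s' j"
proof (rule lift_Suc_mono_le[of "\<lambda>s. reach E t s j", OF _ assms(2)])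
  show "reach E t s j \<subseteq> reach E t (Suc s) j" for s
    using reach_subset[OF assms(1)] self_arcs by fastforce
qed

lemma reach_self: "j < n \<Longrightarrow> j \<in> reach E t s j"
  using reach_mono[of j 0 s t] by auto

lemma card_reach_increases:
  assumes "j < n" "reach E t r j \<noteq> {..<n}"
  shows "card (reach E t r j) < card (reach E t (r + L) j)"
proof -
  let ?R = "reach E t r j" and ?A = "\<Union>k\<in>{t+r..<t+r+L}. E k"
  obtain b where b: "b < n" "b \<notin> ?R"
    using assms reach_subset by blast
  have "(j, b) \<in> (?A \<inter> ({0..<n} \<times> {0..<n}))\<^sup>*"
    using window_connected[of "t+r"] assms b unfolding strongly_connected_def by auto
  then obtain a b' where ab: "(a, b') \<in> ?A" "a \<in> ?R" "b' \<notin> ?R"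
    using rtrancl_leaves_set[OF _ reach_self[OF assms(1)] b(2)] by blast
  then obtain k where k: "k \<in> {t+r..<t+r+L}" "(a, b') \<in> E k"
    by auto
  have "r \<le> k - t"
    using k by auto
  then have "a \<in> reach E t (k - t) j"
    using reach_mono[OF assms(1)] ab(2) by blast
  then have "b' \<in> reach E t (Suc (k - t)) j"
    using k by auto
  moreover have "Suc (k - t) \<le> r + L"
    using k by auto
  ultimately have "b' \<in> reach E t (r + L) j"
    using reach_mono[OF assms(1)] by blast
  moreover have "?R \<subseteq> reach E t (r + L) j"
    using reach_mono[OF assms(1)] by auto
  moreover have "finite (reach E t (r + L) j)"
    using reach_subset[OF assms(1)] finite_subset by blast
  ultimately show ?thesis
    using ab(3) by (intro psubset_card_mono) auto
qed

lemma card_reach_lower_bound: "j < n \<Longrightarrow> min n (Suc m) \<le> card (reach E t (m * L) j)"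
proof (induction m)
  case (Suc m)
  show ?case
  proof (cases "reach E t (m * L) j = {..<n}")
    case True
    moreover have "reach E t (m * L) j \<subseteq> reach E t (Suc m * L) j"
      using reach_mono[OF Suc.prems] by simp
    ultimately have "reach E t (Suc m * L) j = {..<n}"
      using reach_subset[OF Suc.prems, of t "Suc m * L"] by blast
    then show ?thesis by simp
  next
    case False
    then show ?thesis
      using card_reach_increases[OF Suc.prems False] Suc.IH[OF Suc.prems] by (simp add: add.commute)
  qed
qed simp

lemma reach_all:
  assumes "j < n" "k < n"
  shows "k \<in> reach E t (n * L) j"
proof -
  have "reach E t (n * L) j \<subseteq> {..<n}"
    using reach_subset[OF assms(1)] .
  moreover have "card {..<n} \<le> card (reach E t (n * L) j)"
    using card_reach_lower_bound[OF assms(1), of n t] by simp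
  ultimately have "reach E t (n * L) j = {..<n}"
    by (intro card_subset_eq) (auto dest: card_mono[rotated] intro: le_antisym)
  then show ?thesis
    using assms(2) by simp
qed

end

locale push_sum_network = uniformly_connected_graphs n E L
  for n :: nat and E :: "nat \<Rightarrow> (nat \<times> nat) set" and L :: nat +
  fixes w :: "nat \<Rightarrow> nat \<Rightarrow> nat \<Rightarrow> real" and c :: "nat \<Rightarrow> real" and \<beta> :: real
  assumes w_pos: "\<And>t i j. i < n \<Longrightarrow> j \<in> in_nbrs E t i \<Longrightarrow> w t i j > 0"
    and w_zero: "\<And>t i j. j \<notin> in_nbrs E t i \<Longrightarrow> w t i j = 0"
    and beta_pos: "\<beta> > 0"
    and w_beta: "\<And>t i j. i < n \<Longrightarrow> j \<in> in_nbrs E t i \<Longrightarrow> w t i j \<ge> \<beta>"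
    and col_stoch: "\<And>t i. i < n \<Longrightarrow> (\<Sum>j\<in>out_nbrs E t i. w t j i) = 1"
    and c_pos: "\<And>i. i < n \<Longrightarrow> c i > 0"
    and c_sum: "(\<Sum>i<n. c i) = 1"
begin

abbreviation y where "y t i \<equiv> push_sum n w c t i"

lemma weight_nonneg: "0 \<le> w t i j"
proof (cases "j \<in> in_nbrs E t i")
  case True
  then have "i < n"
    using arc_in_range by (auto simp: in_nbrs_def)
  then show ?thesis
    using w_pos[OF _ True] by force
qed (simp add: w_zero)

lemma weight_column_sum: "j < n \<Longrightarrow> (\<Sum>i<n. w t i j) = 1"
proof -
  assume j: "j < n"
  have "out_nbrs E t j \<subseteq> {..<n}"
    using arc_in_range by (auto simp: out_nbrs_def)
  then have "(\<Sum>i\<in>out_nbrs E t j. w t i j) = (\<Sum>i<n. w t i j)"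
    by (intro sum.mono_neutral_left) (auto simp: out_nbrs_def in_nbrs_def w_zero)
  then show ?thesis
    using col_stoch[OF j] by simp
qed

lemma weighted_column_sum_const: "j < n \<Longrightarrow> (\<Sum>i<n. w t i j * a) = a"
  using weight_column_sum by (simp add: sum_distrib_right[symmetric])

lemma weight_arc_ge: "(j, i) \<in> E t \<Longrightarrow> \<beta> \<le> w t i j"
  using w_beta arc_in_range by (auto simp: in_nbrs_def)

lemma beta_le_one: "\<beta> \<le> 1"
proof -
  have "0 < n"
    using n_pos by simp
  then have "\<beta> \<le> w 0 0 0"
    using weight_arc_ge self_arcs by blast
  also have "\<dots> \<le> (\<Sum>i<n. w 0 i 0)"
    by (rule member_le_sum) (use \<open>0 < n\<close> weight_nonneg in auto)
  finally show ?thesis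
    using weight_column_sum[OF \<open>0 < n\<close>] by simp
qed

lemma contraction_factor: "0 \<le> 1 - \<beta> ^ k" "1 - \<beta> ^ k \<le> 1"
  using beta_pos beta_le_one by (auto intro: power_le_one)

lemma sum_ge_term:
  fixes f :: "nat \<Rightarrow> real"
  assumes "\<And>i. i < n \<Longrightarrow> 0 \<le> f i" "k < n"
  shows "f k \<le> (\<Sum>i<n. f i)"
  using assms by (intro member_le_sum) auto

lemma push_sum_pos: "i < n \<Longrightarrow> 0 < y t i"
proof (induction t arbitrary: i)
  case (Suc t)
  have "0 < w t i i * y t i"
    using w_pos[OF Suc.prems] self_arcs[OF Suc.prems] Suc.IH[OF Suc.prems] by (auto simp: in_nbrs_def)
  also have "\<dots> \<le> (\<Sum>j<n. w t i j * y t j)"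
    using Suc weight_nonneg by (intro sum_ge_term mult_nonneg_nonneg) (auto intro: less_imp_le)
  finally show ?case
    by simp
qed (simp add: c_pos)

lemma push_sum_nonneg: "i < n \<Longrightarrow> 0 \<le> y t i"
  using push_sum_pos less_imp_le by blast

lemma push_sum_sum: "(\<Sum>i<n. y t i) = 1"
proof (induction t)
  case (Suc t)
  have "(\<Sum>i<n. y (Suc t) i) = (\<Sum>i<n. \<Sum>j<n. w t i j * y t j)"
    by simp
  also have "\<dots> = (\<Sum>j<n. \<Sum>i<n. w t i j * y t j)"
    by (rule sum.swap)
  also have "\<dots> = (\<Sum>j<n. y t j)"
    by (intro sum.cong) (auto simp: weighted_column_sum_const)
  finally show ?case
    using Suc by simp
qed (simp add: c_sum)

lemma push_sum_along_reach: "j < n \<Longrightarrow> k \<in> reach E t s j \<Longrightarrow> \<beta> ^ s * y t j \<le> y (t + s) k"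
proof (induction s arbitrary: k)
  case (Suc s)
  obtain v where v: "v \<in> reach E t s j" "(v, k) \<in> E (t + s)"
    using Suc.prems by auto
  have "\<beta> ^ Suc s * y t j \<le> \<beta> * y (t + s) v"
    using Suc.IH[OF Suc.prems(1) v(1)] beta_pos by simp
  also have "\<dots> \<le> w (t + s) k v * y (t + s) v"
    using weight_arc_ge[OF v(2)] push_sum_nonneg arc_in_range[OF v(2)] by (intro mult_right_mono) auto
  also have "\<dots> \<le> (\<Sum>i<n. w (t + s) k i * y (t + s) i)"
    using push_sum_nonneg weight_nonneg arc_in_range[OF v(2)] by (intro sum_ge_term mult_nonneg_nonneg) auto
  finally show ?case
    by simp
qed simp

lemma push_sum_lower_bound: "\<exists>\<rho>>0. \<forall>t i. i < n \<longrightarrow> \<rho> \<le> y t i"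
proof -
  let ?K = "n * L"
  define cmin where "cmin = Min (c ` {..<n})"
  have cmin_pos: "0 < cmin"
    unfolding cmin_def using c_pos n_pos by (subst Min_gr_iff) (auto simp: lessThan_empty_iff)
  have "min (\<beta> ^ ?K * cmin) (\<beta> ^ ?K / n) \<le> y t i" if i: "i < n" for t i
  proof (cases "t < ?K")
    case True
    have "\<beta> ^ ?K * cmin \<le> \<beta> ^ t * c i"
      using True i beta_pos beta_le_one cmin_pos
      by (intro mult_mono power_decreasing) (auto simp: cmin_def)
    also have "\<dots> \<le> y t i"
      using push_sum_along_reach[of i i 0 t] i reach_self by simp
    finally show ?thesis
      by simp
  next
    case False
    have "(\<Sum>j<n. \<beta> ^ ?K * y (t - ?K) j) \<le> (\<Sum>j<n. y t i)"
      using push_sum_along_reach[OF _ reach_all[OF _ i], of _ "t - ?K"] False by (intro sum_mono) auto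
    then have "\<beta> ^ ?K \<le> n * y t i"
      by (simp add: push_sum_sum sum_distrib_left[symmetric])
    then have "\<beta> ^ ?K / n \<le> y t i"
      using n_pos by (simp add: divide_simps mult.commute)
    then show ?thesis
      by simp
  qed
  then show ?thesis
    using beta_pos cmin_pos n_pos by (intro exI[of _ "min (\<beta> ^ ?K * cmin) (\<beta> ^ ?K / n)"]) auto
qed

theorem push_sum_absolute_probability_sequence:
  "absolute_probability_sequence n (push_sum_S n w c) (push_sum n w c)"
  unfolding absolute_probability_sequence_def stochastic_vector_def
proof (intro conjI allI impI)
  fix t j assume j: "j < n"
  have "y (Suc t) i \<noteq> 0" if "i < n" for i
    using push_sum_pos[OF that, of "Suc t"] by simp
  then have "(\<Sum>i<n. y (Suc t) i * push_sum_S n w c t i j) = (\<Sum>i<n. w t i j * y t j)"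
    by (intro sum.cong) (auto simp: push_sum_S_def simp del: push_sum.simps)
  then show "y t j = (\<Sum>i<n. y (Suc t) i * push_sum_S n w c t i j)"
    using weighted_column_sum_const[OF j] by simp
qed (auto simp: push_sum_sum push_sum_pos less_imp_le)

definition backward_solution :: "(nat \<Rightarrow> nat \<Rightarrow> real) \<Rightarrow> bool" where
  "backward_solution z \<longleftrightarrow> (\<forall>s j. j < n \<longrightarrow> z s j = (\<Sum>i<n. w s i j * z (Suc s) i))"

definition spread_le :: "(nat \<Rightarrow> real) \<Rightarrow> real \<Rightarrow> bool" where
  "spread_le v \<delta> \<longleftrightarrow> (\<forall>i<n. \<forall>j<n. v i - v j \<le> \<delta>)"

lemma backward_solution_diff_const:
  assumes "backward_solution z"
  shows "backward_solution (\<lambda>s i. z s i - a)" "backward_solution (\<lambda>s i. a - z s i)"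
  using assms weighted_column_sum_const
  by (auto simp: backward_solution_def right_diff_distrib sum_subtractf)

lemma backward_solution_along_reach:
  assumes "backward_solution z" "\<And>s i. s \<le> T \<Longrightarrow> i < n \<Longrightarrow> 0 \<le> z s i"
    and "j < n" "k \<in> reach E t s j" "t + s \<le> T"
  shows "\<beta> ^ s * z (t + s) k \<le> z t j"
  using assms(4,5)
proof (induction s arbitrary: k)
  case (Suc s)
  obtain v where v: "v \<in> reach E t s j" "(v, k) \<in> E (t + s)"
    using Suc.prems by auto
  have vk: "v < n" "k < n"
    using arc_in_range[OF v(2)] by auto
  have nonneg: "i < n \<Longrightarrow> 0 \<le> z (Suc (t + s)) i" for i
    using assms(2) Suc.prems by auto
  have "\<beta> ^ Suc s * z (t + Suc s) k \<le> \<beta> ^ s * (w (t + s) k v * z (Suc (t + s)) k)"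
    using weight_arc_ge[OF v(2)] nonneg[OF vk(2)] beta_pos
    by (simp add: mult.left_commute mult_right_mono)
  also have "\<dots> \<le> \<beta> ^ s * (\<Sum>i<n. w (t + s) i v * z (Suc (t + s)) i)"
    using beta_pos vk nonneg weight_nonneg
    by (intro mult_left_mono sum_ge_term[of "\<lambda>i. w (t + s) i v * z (Suc (t + s)) i"] mult_nonneg_nonneg) auto
  also have "\<dots> = \<beta> ^ s * z (t + s) v"
    using assms(1) vk by (simp add: backward_solution_def)
  also have "\<dots> \<le> z t j"
    using Suc.IH[OF v(1)] Suc.prems by simp
  finally show ?case .
qed simp

lemma backward_solution_interval:
  assumes "backward_solution z" "\<And>i. i < n \<Longrightarrow> a \<le> z T i \<and> z T i \<le> b" "s \<le> T"
  shows "\<forall>i<n. a \<le> z s i \<and> z s i \<le> b"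
  using assms(3)
proof (induction s rule: inc_induct)
  case (step s)
  show ?case
  proof (intro allI impI)
    fix i assume i: "i < n"
    have "(\<Sum>j<n. w s j i * a) \<le> (\<Sum>j<n. w s j i * z (Suc s) j)"
          "(\<Sum>j<n. w s j i * z (Suc s) j) \<le> (\<Sum>j<n. w s j i * b)"
      using step.IH weight_nonneg by (auto intro!: sum_mono mult_left_mono)
    then show "a \<le> z s i \<and> z s i \<le> b"
      using assms(1) i weighted_column_sum_const[OF i] by (simp add: backward_solution_def)
  qed
qed (use assms(2) in auto)

lemma spread_contracts:
  assumes z: "backward_solution z" and spread: "spread_le (z (t + n * L)) \<delta>"
  shows "spread_le (z t) ((1 - \<beta> ^ (n * L)) * \<delta>)"
proof -
  let ?T = "t + n * L" and ?g = "\<beta> ^ (n * L)"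
  have fin: "finite (z ?T ` {..<n})" "z ?T ` {..<n} \<noteq> {}"
    using n_pos by (auto simp: lessThan_empty_iff)
  obtain kmin where kmin: "kmin < n" "z ?T kmin = Min (z ?T ` {..<n})"
    using Min_in[OF fin] by auto
  obtain kmax where kmax: "kmax < n" "z ?T kmax = Max (z ?T ` {..<n})"
    using Max_in[OF fin] by auto
  define a b where "a = z ?T kmin" and "b = z ?T kmax"
  have at_T: "a \<le> z ?T i \<and> z ?T i \<le> b" if "i < n" for i
    using fin kmin kmax that by (auto simp: a_def b_def)
  have between: "a \<le> z s i \<and> z s i \<le> b" if "s \<le> ?T" "i < n" for s i
    using backward_solution_interval[OF z at_T that(1)] that(2) by simp
  have "b - a \<le> \<delta>"
    using spread kmin(1) kmax(1) unfolding spread_le_def a_def b_def by blast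
  have "0 \<le> b - a"
    using between[OF _ kmin(1), of ?T] by simp
  have lo_nonneg: "0 \<le> z s i - a" and hi_nonneg: "0 \<le> b - z s i" if "s \<le> ?T" "i < n" for s i
    using between[OF that] by simp_all
  \<comment> \<open>Within K steps every agent receives weight at least \<beta>^K from the extreme agents.\<close>
  have above_min: "?g * (b - a) \<le> z t j - a" if "j < n" for j
    using backward_solution_along_reach[OF backward_solution_diff_const(1)[OF z] lo_nonneg
        that reach_all[OF that kmax(1)] order.refl]
    by (simp add: b_def)
  have below_max: "?g * (b - a) \<le> b - z t j" if "j < n" for j
    using backward_solution_along_reach[OF backward_solution_diff_const(2)[OF z] hi_nonneg
        that reach_all[OF that kmin(1)] order.refl]
    by (simp add: a_def)
  have "z t i - z t j \<le> (1 - ?g) * \<delta>" if "i < n" "j < n" for i j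
  proof -
    have "z t i - z t j \<le> (1 - 2 * ?g) * (b - a)"
      using above_min[OF that(2)] below_max[OF that(1)] by (simp add: algebra_simps)
    also have "\<dots> \<le> (1 - ?g) * (b - a)"
      using \<open>0 \<le> b - a\<close> beta_pos by (intro mult_right_mono) auto
    also have "\<dots> \<le> (1 - ?g) * \<delta>"
      using \<open>b - a \<le> \<delta>\<close> contraction_factor by (intro mult_left_mono) auto
    finally show ?thesis .
  qed
  then show ?thesis
    by (simp add: spread_le_def)
qed

lemma bounded_backward_solution_consensus:
  assumes z: "backward_solution z" and bounded: "\<And>s. spread_le (z s) B"
    and "i < n" "j < n"
  shows "z t i = z t j"
proof -
  have "spread_le (z t) ((1 - \<beta> ^ (n * L)) ^ m * B)" for m t
  proof (induction m arbitrary: t)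
    case (Suc m)
    show ?case
      using spread_contracts[OF z Suc] by (simp add: mult.assoc)
  qed (simp add: bounded)
  then have "z t i - z t j \<le> (1 - \<beta> ^ (n * L)) ^ m * B" "z t j - z t i \<le> (1 - \<beta> ^ (n * L)) ^ m * B" for m
    using assms(3,4) by (auto simp: spread_le_def)
  moreover have factor: "0 \<le> 1 - \<beta> ^ (n * L)" "1 - \<beta> ^ (n * L) < 1"
    using contraction_factor beta_pos by auto
  ultimately have "z t i - z t j \<le> 0" "z t j - z t i \<le> 0"
    using nonpos_if_le_geometric[OF factor] by blast+
  then show ?thesis
    by simp
qed

lemma absolute_probability_ratio_backward_solution:
  assumes "absolute_probability_sequence n (push_sum_S n w c) p"
  shows "backward_solution (\<lambda>s i. p s i / y s i)"
  unfolding backward_solution_def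
proof (intro allI impI)
  fix s j assume j: "j < n"
  have "p s j = (\<Sum>i<n. p (Suc s) i * push_sum_S n w c s i j)"
    using assms j by (simp add: absolute_probability_sequence_def)
  also have "\<dots> = y s j * (\<Sum>i<n. w s i j * (p (Suc s) i / y (Suc s) i))"
    unfolding sum_distrib_left by (simp add: push_sum_S_def mult_ac del: push_sum.simps)
  finally show "p s j / y s j = (\<Sum>i<n. w s i j * (p (Suc s) i / y (Suc s) i))"
    using push_sum_pos[OF j, of s] by (simp add: field_simps)
qed

lemma stochastic_vector_le_one: "stochastic_vector n v \<Longrightarrow> i < n \<Longrightarrow> v i \<le> 1"
  using sum_ge_term[of v i] by (auto simp: stochastic_vector_def)

theorem absolute_probability_sequence_unique:
  assumes p: "absolute_probability_sequence n (push_sum_S n w c) p" and "i < n"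
  shows "p t i = y t i"
proof -
  define q where "q s i = p s i / y s i" for s i
  have stoch: "stochastic_vector n (p s)" for s
    using p by (simp add: absolute_probability_sequence_def)
  obtain \<rho> where \<rho>: "\<rho> > 0" "\<And>t i. i < n \<Longrightarrow> \<rho> \<le> y t i"
    using push_sum_lower_bound by blast
  have "0 \<le> q s k \<and> q s k \<le> 1 / \<rho>" if "k < n" for s k
  proof -
    have "q s k \<le> 1 / y s k"
      unfolding q_def using stochastic_vector_le_one[OF stoch that] push_sum_nonneg[OF that]
      by (rule divide_right_mono)
    also have "\<dots> \<le> 1 / \<rho>"
      using \<rho> push_sum_pos[OF that] that by (intro divide_left_mono mult_pos_pos) auto
    moreover have "0 \<le> q s k"
      unfolding q_def using stoch[of s] push_sum_pos[OF that] that
      by (intro divide_nonneg_pos) (auto simp: stochastic_vector_def)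
    ultimately show ?thesis
      by simp
  qed
  then have "spread_le (q s) (1 / \<rho>)" for s
    unfolding spread_le_def by (metis diff_le_eq add_increasing2 order_trans)
  moreover have "0 < n"
    using n_pos by simp
  ultimately have consensus: "q t k = q t 0" if "k < n" for k
    using bounded_backward_solution_consensus[OF absolute_probability_ratio_backward_solution[OF p]] that
    unfolding q_def by blast
  have p_eq: "p t k = q t 0 * y t k" if "k < n" for k
  proof -
    have "p t k = q t k * y t k"
      using push_sum_pos[OF that, of t] by (simp add: q_def)
    then show ?thesis
      using consensus[OF that] by simp
  qed
  have "1 = (\<Sum>k<n. p t k)"
    using stoch by (simp add: stochastic_vector_def)
  also have "\<dots> = q t 0"
    using p_eq by (simp add: sum_distrib_left[symmetric] push_sum_sum)
  finally show ?thesis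
    using p_eq[OF assms(2)] by simp
qed

end

theorem proposition5:
  fixes n :: nat and E :: "nat \<Rightarrow> (nat \<times> nat) set"
    and w :: "nat \<Rightarrow> nat \<Rightarrow> nat \<Rightarrow> real" and c :: "nat \<Rightarrow> real" and \<beta> :: real
  assumes n_pos: "n \<ge> 1"
    and edges: "\<And>t. E t \<subseteq> {0..<n} \<times> {0..<n}"
    and self_arcs: "\<And>t i. i < n \<Longrightarrow> (i, i) \<in> E t"
    and w_pos: "\<And>t i j. i < n \<Longrightarrow> j \<in> in_nbrs E t i \<Longrightarrow> w t i j > 0"
    and w_zero: "\<And>t i j. j \<notin> in_nbrs E t i \<Longrightarrow> w t i j = 0"
    and beta_pos: "\<beta> > 0"
    and w_beta: "\<And>t i j. i < n \<Longrightarrow> j \<in> in_nbrs E t i \<Longrightarrow> w t i j \<ge> \<beta>"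
    and col_stoch: "\<And>t i. i < n \<Longrightarrow> (\<Sum>j\<in>out_nbrs E t i. w t j i) = 1"
    and c_pos: "\<And>i. i < n \<Longrightarrow> c i > 0"
    and c_sum: "(\<Sum>i<n. c i) = 1"
    and usc: "uniformly_strongly_connected n E"
  shows "absolute_probability_sequence n (push_sum_S n w c) (push_sum n w c)
    \<and> (\<forall>p. absolute_probability_sequence n (push_sum_S n w c) p \<longrightarrow>
           (\<forall>t. \<forall>i<n. p t i = push_sum n w c t i))"
proof -
  obtain L where window: "\<And>t. strongly_connected n (\<Union>k\<in>{t..<t+L}. E k)"
    using usc unfolding uniformly_strongly_connected_def by blast
  interpret push_sum_network n E L w c \<beta>
    using assms window by unfold_locales auto
  show ?thesis
    using push_sum_absolute_probability_sequence absolute_probability_sequence_unique by blast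
qed

end
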